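(* Let $M_5$ be the five-valued matrix on the set of truth values $V=\{0,1,2,3,4\}$ with designated set $D=\{0\}$ and operations defined as follows (for $x,y\in V$): - Implication $x\to y$ is given by the rows (row $x$ lists $x\to 0, x\to 1, x\to 2, x\to 3, x\to 4$): row $0$: $0,1,1,1,1$; row $1$: $0,0,0,0,0$; row $2$: $0,0,0,0,0$; row $3$: $0,0,4,0,4$; row $4$: $0,0,3,3,0$. - Conjunction: $x\wedge y=0$ if $x=y=0$, and $x\wedge y=1$ otherwise. - Disjunction: $x\vee y=0$ if $x=0$ or $y=0$, and $x\vee y=1$ otherwise. - Negation: $\neg 0=2$, $\neg 1=0$, $\neg 2=0$, $\neg 3=1$, $\neg 4=1$. - Falsum: $\bot=1$. Then: (i) $M_5$ is normal, i.e. for all $x,y\in V$, if $x\in D$ and $(x\to y)\in D$ then $y\in D$; (ii) each of the following formulas takes a designated value under every assignment of values in $V$ to $p,q,r$: (K) $p\to(q\to p)$; peirce $((p\to q)\to p)\to p$; andelimr $(p\wedge q)\to p$; andeliml $(p\wedge q)\to q$; andintro $p\to(q\to(p\wedge q))$; orintror $p\to(p\vee q)$; orintrol $p\to(q\vee p)$; orelim $(p\vee q)\to((p\to r)\to((q\to r)\to r))$; contrap $(p\to\neg q)\to(q\to\neg p)$; notelim $\neg p\to(p\to q)$; falseelim $\bot\to p$; (iii) the formula (S) $(p\to(q\to r))\to((p\to q)\to(p\to r))$ takes the non-designated value $1$ under the assignment $p=3,q=0,r=2$. Consequently, (S) is not derivable from the other eleven axioms listed in (ii) (taken as schemes/with substitution)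 using modus ponens as the sole inference rule.
   Context: Formulas are built from propositional variables using the binary connectives $\to,\wedge,\vee$, the unary connective $\neg$ and the constant $\bot$. A (many-valued) matrix consists of a finite set of truth values, a subset of designated values, and an operation on the truth values for each connective; a formula is evaluated under an assignment of truth values to its variables by interpreting each connective by its operation. A formula is validated by the matrix if it takes a designated value under every assignment. The matrix is called normal if modus ponens preserves designation: whenever $x$ and $x\to y$ are designated, so is $y$. Modus ponens is the rule: from $p$ and $p\to q$ infer $q$. *)

theory Defs
  imports Main
begin

datatype form = Var nat | Imp form form | Conj form form | Disj form form | Neg form | Bot

definition V :: "nat set" where "V = {0,1,2,3,4}"
definition D :: "nat set" where "D = {0}"

fun imp5 :: "nat \<Rightarrow> nat \<Rightarrow> nat" where
  "imp5 x y =
    (if x = 0 then (if y = 0 then 0 else 1)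
     else if x = 1 \<or> x = 2 then 0
     else if x = 3 then (if y = 2 \<or> y = 4 then 4 else 0)
     else (if y = 2 \<or> y = 3 then 3 else 0))"

definition conj5 :: "nat \<Rightarrow> nat \<Rightarrow> nat" where
  "conj5 x y = (if x = 0 \<and> y = 0 then 0 else 1)"

definition disj5 :: "nat \<Rightarrow> nat \<Rightarrow> nat" where
  "disj5 x y = (if x = 0 \<or> y = 0 then 0 else 1)"

definition neg5 :: "nat \<Rightarrow> nat" where
  "neg5 x = (if x = 0 then 2 else if x = 1 \<or> x = 2 then 0 else 1)"

definition bot5 :: nat where "bot5 = 1"

fun eval :: "(nat \<Rightarrow> nat) \<Rightarrow> form \<Rightarrow> nat" where
  "eval v (Var i) = v i"
| "eval v (Imp a b) = imp5 (eval v a) (eval v b)"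
| "eval v (Conj a b) = conj5 (eval v a) (eval v b)"
| "eval v (Disj a b) = disj5 (eval v a) (eval v b)"
| "eval v (Neg a) = neg5 (eval v a)"
| "eval v Bot = bot5"

definition validated :: "form \<Rightarrow> bool" where
  "validated A \<longleftrightarrow> (\<forall>v. (\<forall>i. v i \<in> V) \<longrightarrow> eval v A \<in> D)"

definition normal5 :: bool where
  "normal5 \<longleftrightarrow> (\<forall>x\<in>V. \<forall>y\<in>V. x \<in> D \<and> imp5 x y \<in> D \<longrightarrow> y \<in> D)"

definition axK where "axK P Q = Imp P (Imp Q P)"
definition axS where "axS P Q R = Imp (Imp P (Imp Q R)) (Imp (Imp P Q) (Imp P R))"
definition peirce where "peirce P Q = Imp (Imp (Imp P Q) P) P"
definition andelimr where "andelimr P Q = Imp (Conj P Q) P"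
definition andeliml where "andeliml P Q = Imp (Conj P Q) Q"
definition andintro where "andintro P Q = Imp P (Imp Q (Conj P Q))"
definition orintror where "orintror P Q = Imp P (Disj P Q)"
definition orintrol where "orintrol P Q = Imp P (Disj Q P)"
definition orelim where "orelim P Q R = Imp (Disj P Q) (Imp (Imp P R) (Imp (Imp Q R) R))"
definition contrap where "contrap P Q = Imp (Imp P (Neg Q)) (Imp Q (Neg P))"
definition notelim where "notelim P Q = Imp (Neg P) (Imp P Q)"
definition falseelim where "falseelim P = Imp Bot P"

inductive derivable :: "form \<Rightarrow> bool" where
  dK: "derivable (axK P Q)"
| dPeirce: "derivable (peirce P Q)"
| dAndr: "derivable (andelimr P Q)"
| dAndl: "derivable (andeliml P Q)"
| dAndi: "derivable (andintro P Q)"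
| dOrr: "derivable (orintror P Q)"
| dOrl: "derivable (orintrol P Q)"
| dOre: "derivable (orelim P Q R)"
| dContra: "derivable (contrap P Q)"
| dNot: "derivable (notelim P Q)"
| dFalse: "derivable (falseelim P)"
| MP: "derivable A \<Longrightarrow> derivable (Imp A B) \<Longrightarrow> derivable B"

end

theory Submission
  imports Defs
begin

text \<open>Every axiom scheme takes the value 0 under every assignment, and modus ponens preserves
  the value 0, so every derivable formula is validated.\<close>

lemma eval_in_V: "(\<forall>i. v i \<in> V) \<Longrightarrow> eval v A \<in> V"
  by (induction A) (auto simp: V_def conj5_def disj5_def neg5_def bot5_def)

lemma normal_M5: normal5
  by (simp add: normal5_def V_def D_def)

lemma imp5_zero_left: "imp5 0 y = 0 \<Longrightarrow> y = 0"
  by (simp split: if_splits)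

lemma axiom_tables_zero:
  "\<lbrakk>x \<in> V; y \<in> V\<rbrakk> \<Longrightarrow> imp5 x (imp5 y x) = 0"
  "\<lbrakk>x \<in> V; y \<in> V\<rbrakk> \<Longrightarrow> imp5 (imp5 (imp5 x y) x) x = 0"
  "\<lbrakk>x \<in> V; y \<in> V\<rbrakk> \<Longrightarrow> imp5 (conj5 x y) x = 0"
  "\<lbrakk>x \<in> V; y \<in> V\<rbrakk> \<Longrightarrow> imp5 (conj5 x y) y = 0"
  "\<lbrakk>x \<in> V; y \<in> V\<rbrakk> \<Longrightarrow> imp5 x (imp5 y (conj5 x y)) = 0"
  "\<lbrakk>x \<in> V; y \<in> V\<rbrakk> \<Longrightarrow> imp5 x (disj5 x y) = 0"
  "\<lbrakk>x \<in> V; y \<in> V\<rbrakk> \<Longrightarrow> imp5 x (disj5 y x) = 0"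
  "\<lbrakk>x \<in> V; y \<in> V; z \<in> V\<rbrakk> \<Longrightarrow>
     imp5 (disj5 x y) (imp5 (imp5 x z) (imp5 (imp5 y z) z)) = 0"
  "\<lbrakk>x \<in> V; y \<in> V\<rbrakk> \<Longrightarrow> imp5 (imp5 x (neg5 y)) (imp5 y (neg5 x)) = 0"
  "\<lbrakk>x \<in> V; y \<in> V\<rbrakk> \<Longrightarrow> imp5 (neg5 x) (imp5 x y) = 0"
  "x \<in> V \<Longrightarrow> imp5 bot5 x = 0"
  by (auto simp: V_def conj5_def disj5_def neg5_def bot5_def)

lemma derivable_eval_zero:
  assumes "derivable A" and v: "\<forall>i. v i \<in> V"
  shows "eval v A = 0"
  using assms(1)
proof (induction rule: derivable.induct)
  \<comment> \<open>imp5.simps is switched off: unfolding imp5 on symbolic arguments explodes the case split.\<close>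
  case (MP A B)
  then show ?case by (simp del: imp5.simps add: imp5_zero_left)
qed (simp_all del: imp5.simps add: axiom_tables_zero eval_in_V[OF v] axK_def peirce_def
       andelimr_def andeliml_def andintro_def orintror_def orintrol_def orelim_def
       contrap_def notelim_def falseelim_def)

lemma derivable_validated: "derivable A \<Longrightarrow> validated A"
  by (simp add: validated_def D_def derivable_eval_zero)

theorem mainTheorem1:
  shows "normal5
    \<and> (let p = Var 0; q = Var 1; r = Var 2 in
         validated (axK p q) \<and> validated (peirce p q) \<and> validated (andelimr p q)
       \<and> validated (andeliml p q) \<and> validated (andintro p q) \<and> validated (orintror p q)
       \<and> validated (orintrol p q) \<and> validated (orelim p q r) \<and> validated (contrap p q)
       \<and> validated (notelim p q) \<and> validated (falseelim p))
    \<and> eval (\<lambda>i. if i = 0 then 3 else if i = 1 then 0 else 2) (axS (Var 0) (Var 1) (Var 2)) = 1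
    \<and> \<not> derivable (axS (Var 0) (Var 1) (Var 2))"
proof -
  define v :: "nat \<Rightarrow> nat" where "v = (\<lambda>i. if i = 0 then 3 else if i = 1 then 0 else 2)"
  have S_value: "eval v (axS (Var 0) (Var 1) (Var 2)) = 1"
    by (simp add: v_def axS_def)
  have "\<forall>i. v i \<in> V"
    by (simp add: v_def V_def)
  then have S_underivable: "\<not> derivable (axS (Var 0) (Var 1) (Var 2))"
    using S_value derivable_eval_zero by fastforce
  with normal_M5 S_value show ?thesis
    by (simp add: v_def Let_def derivable_validated derivable.intros)
qed

end
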